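(* Let $(B,\mathfrak{m})$ be a deformation base, $X$ a vector space and $M\subseteq B\widehat{\otimes}X$ a pseudoclosed $B$-submodule. The following are equivalent: (i) $M$ is quasi-flat; (ii) $M$ is quasi-flat and closed in the $\mathfrak{m}$-adic topology; (iii) $M\cap\mathfrak{m}^kX\subseteq\mathfrak{m}^kM+\mathfrak{m}^{k+1}X$ for every $k\ge1$; (iv) $M\cap\mathfrak{m}^kX\subseteq\mathfrak{m}^kM$ for every $k\ge1$.
   Context: Deformation base: complete local Noetherian unital $\mathbb{C}$-algebra $B$ with maximal ideal $\mathfrak{m}$, $B/\mathfrak{m}=\mathbb{C}$. $B\widehat{\otimes}X=\varprojlim(B/\mathfrak{m}^k\otimes X)$ with its $\mathfrak{m}$-adic topology; $\mathfrak{m}^kX$ is the image of $\mathfrak{m}^k\widehat{\otimes}X$. For a subspace $Y\subseteq B\widehat{\otimes}X$: $BY=\{\sum_ib_iy_i:y_i\in Y,b_i\in\mathfrak{m}^{k_i},k_i\to\infty\}$, and $\mathfrak{m}^kY$ the same with all $k_i\ge k$. $M$ is pseudoclosed if $BM\subseteq M$, quasi-flat if $M\cap\mathfrak{m}X\subseteq\mathfrak{m}M$. *)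

theory Defs
  imports Complex_Main "HOL-Library.Function_Algebras"
begin

definition is_ideal :: "'b::comm_ring_1 set \<Rightarrow> bool" where
  "is_ideal I \<longleftrightarrow> 0 \<in> I \<and> (\<forall>x\<in>I. \<forall>y\<in>I. x + y \<in> I) \<and> (\<forall>r. \<forall>x\<in>I. r * x \<in> I)"

definition ideal_gen :: "'b::comm_ring_1 set \<Rightarrow> 'b set" where
  "ideal_gen S = {x. \<exists>r. x = (\<Sum>s\<in>S. r s * s)}"

definition noetherian_ring :: "'b::comm_ring_1 itself \<Rightarrow> bool" where
  "noetherian_ring _ \<longleftrightarrow>
     (\<forall>I::'b set. is_ideal I \<longrightarrow> (\<exists>S. finite S \<and> S \<subseteq> I \<and> I = ideal_gen S))"

primrec ideal_pow :: "'b::comm_ring_1 set \<Rightarrow> nat \<Rightarrow> 'b set" where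
  "ideal_pow m 0 = UNIV"
| "ideal_pow m (Suc k) =
     {x. \<exists>F::nat set. \<exists>a c. finite F \<and> (\<forall>j\<in>F. a j \<in> m \<and> c j \<in> ideal_pow m k)
            \<and> x = (\<Sum>j\<in>F. a j * c j)}"

text \<open>A deformation base: complete local Noetherian unital C-algebra B (the type 'b with
  structure map iota : C -> B, a unital ring homomorphism) with maximal ideal m and
  B/m = C (every b is congruent mod m to iota c for a unique c).
  m-adic completeness: separated, and every m-adic Cauchy sequence converges.\<close>
definition deformation_base :: "(complex \<Rightarrow> 'b::comm_ring_1) \<Rightarrow> 'b set \<Rightarrow> bool" where
  "deformation_base \<iota> m \<longleftrightarrow>
     (\<iota> 1 = 1 \<and> (\<forall>x y. \<iota> (x + y) = \<iota> x + \<iota> y) \<and> (\<forall>x y. \<iota> (x * y) = \<iota> x * \<iota> y))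
   \<and> noetherian_ring TYPE('b)
   \<and> is_ideal m \<and> m \<noteq> UNIV \<and> (\<forall>I. is_ideal I \<and> I \<noteq> UNIV \<longrightarrow> I \<subseteq> m)
   \<and> (\<forall>b. \<exists>!c. b - \<iota> c \<in> m)
   \<and> (\<Inter>k. ideal_pow m k) = {0}
   \<and> (\<forall>x::nat \<Rightarrow> 'b. (\<forall>k. \<exists>N. \<forall>n\<ge>N. \<forall>n'\<ge>N. x n - x n' \<in> ideal_pow m k)
          \<longrightarrow> (\<exists>l. \<forall>k. \<exists>N. \<forall>n\<ge>N. x n - l \<in> ideal_pow m k))"

text \<open>With X the vector space with basis indexed by 'i, B/m^k \<otimes> X is the space of finitely
  supported functions 'i => B/m^k, and the inverse limit is the set of functions
  f : 'i => B such that, for every k, f i \<in> m^k for all but finitely many i.\<close>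
definition ctensor :: "'b::comm_ring_1 set \<Rightarrow> ('i \<Rightarrow> 'b) set" where
  "ctensor m = {f. \<forall>k. finite {i. f i \<notin> ideal_pow m k}}"

text \<open>m^k X: image of m^k \<otimes> X in B \<otimes> X (coefficients in m^k).\<close>
definition mpowX :: "'b::comm_ring_1 set \<Rightarrow> nat \<Rightarrow> ('i \<Rightarrow> 'b) set" where
  "mpowX m k = {f \<in> ctensor m. \<forall>i. f i \<in> ideal_pow m k}"

definition smult_ct :: "'b::comm_ring_1 \<Rightarrow> ('i \<Rightarrow> 'b) \<Rightarrow> ('i \<Rightarrow> 'b)" where
  "smult_ct b f = (\<lambda>i. b * f i)"

definition mconv :: "'b::comm_ring_1 set \<Rightarrow> (nat \<Rightarrow> 'i \<Rightarrow> 'b) \<Rightarrow> ('i \<Rightarrow> 'b) \<Rightarrow> bool" where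
  "mconv m s l \<longleftrightarrow> (\<forall>k. \<exists>N. \<forall>n\<ge>N. s n - l \<in> mpowX m k)"

definition mpowY :: "'b::comm_ring_1 set \<Rightarrow> nat \<Rightarrow> ('i \<Rightarrow> 'b) set \<Rightarrow> ('i \<Rightarrow> 'b) set" where
  "mpowY m k Y = {s. \<exists>(b::nat \<Rightarrow> 'b) (y::nat \<Rightarrow> 'i \<Rightarrow> 'b) (\<kappa>::nat \<Rightarrow> nat).
      (\<forall>j. y j \<in> Y) \<and> (\<forall>j. \<kappa> j \<ge> k \<and> b j \<in> ideal_pow m (\<kappa> j))
      \<and> filterlim \<kappa> at_top sequentially
      \<and> mconv m (\<lambda>n. \<Sum>j<n. smult_ct (b j) (y j)) s}"

definition BY :: "'b::comm_ring_1 set \<Rightarrow> ('i \<Rightarrow> 'b) set \<Rightarrow> ('i \<Rightarrow> 'b) set" where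
  "BY m Y = mpowY m 0 Y"

definition B_submodule :: "'b::comm_ring_1 set \<Rightarrow> ('i \<Rightarrow> 'b) set \<Rightarrow> bool" where
  "B_submodule m M \<longleftrightarrow> M \<subseteq> ctensor m \<and> 0 \<in> M \<and> (\<forall>x\<in>M. \<forall>y\<in>M. x + y \<in> M)
     \<and> (\<forall>b. \<forall>x\<in>M. smult_ct b x \<in> M)"

definition pseudoclosed :: "'b::comm_ring_1 set \<Rightarrow> ('i \<Rightarrow> 'b) set \<Rightarrow> bool" where
  "pseudoclosed m M \<longleftrightarrow> BY m M \<subseteq> M"

definition quasi_flat :: "'b::comm_ring_1 set \<Rightarrow> ('i \<Rightarrow> 'b) set \<Rightarrow> bool" where
  "quasi_flat m M \<longleftrightarrow> M \<inter> mpowX m 1 \<subseteq> mpowY m 1 M"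

definition madic_closed :: "'b::comm_ring_1 set \<Rightarrow> ('i \<Rightarrow> 'b) set \<Rightarrow> bool" where
  "madic_closed m M \<longleftrightarrow>
     (\<forall>x\<in>ctensor m. (\<forall>k. \<exists>y\<in>M. x - y \<in> mpowX m k) \<longrightarrow> x \<in> M)"

end

theory Submission
  imports Defs "HOL-Library.Nat_Bijection"
begin

text \<open>
  Everything rests on two properties of the modules \<open>m\<^bsup>c\<^esup>M\<close> of convergent combinations
  \<open>\<Sum> b\<^sub>j y\<^sub>j\<close> with \<open>y\<^sub>j \<in> M\<close>, \<open>b\<^sub>j \<in> m\<^bsup>c\<^sub>j\<^esup>\<close> and \<open>c \<le> c\<^sub>j \<rightarrow> \<infinity>\<close>.

  First, \<open>m\<^bsup>c\<^esup>M\<close> is closed under \<open>m\<close>-adically convergent series \<open>\<Sum> d\<^sub>k\<close> with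
  \<open>d\<^sub>k \<in> m\<^bsup>\<phi> k\<^esup>M\<close> and \<open>c \<le> \<phi> k \<rightarrow> \<infinity>\<close>: enumerate the resulting double series along
  the Cantor pairing.  Telescoping an approximating sequence then shows that (iv) makes \<open>M\<close>
  closed, and summing the iterated decompositions of (iii) shows quasi-flatness;
  pseudoclosedness, \<open>m\<^bsup>c\<^esup>M \<subseteq> M\<close>, brings the limits back into \<open>M\<close>.

  Second, quasi-flatness gives (iv) by induction on \<open>k\<close>: an element of
  \<open>M \<inter> m\<^bsup>k+1\<^esup>X \<subseteq> m\<^bsup>k\<^esup>M\<close> is a finite combination \<open>\<Sum> e\<^sub>i w\<^sub>i\<close> with \<open>e\<^sub>i \<in> m\<^bsup>k\<^esup>\<close>
  plus a tail in \<open>m\<^bsup>k+1\<^esup>M\<close>.  If all \<open>w\<^sub>i\<close> lie in \<open>mX\<close>, quasi-flatness puts them in \<open>mM\<close>.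
  Otherwise some coordinate of some \<open>w\<^sub>j\<close> is a unit, because \<open>B\<close> is local; subtracting
  multiples of \<open>w\<^sub>j\<close> from the other \<open>w\<^sub>i\<close> shortens the combination, and what is split off
  is a multiple of \<open>w\<^sub>j\<close> with coefficient in \<open>m\<^bsup>k+1\<^esup>\<close>.
\<close>

section \<open>Powers of an ideal\<close>

lemma ideal_pow_SucI:
  fixes F :: "nat set"
  assumes "finite F" "\<forall>j\<in>F. a j \<in> m \<and> c j \<in> ideal_pow m k"
    and "x = (\<Sum>j\<in>F. a j * c j)"
  shows "x \<in> ideal_pow m (Suc k)"
  using assms unfolding ideal_pow.simps(2) by blast

lemma ideal_pow_SucE:
  assumes "x \<in> ideal_pow m (Suc k)"
  obtains F :: "nat set" and a c where "finite F" "\<forall>j\<in>F. a j \<in> m \<and> c j \<in> ideal_pow m k"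
    and "x = (\<Sum>j\<in>F. a j * c j)"
  using assms unfolding ideal_pow.simps(2) by auto

declare ideal_pow.simps(2)[simp del]

lemma zero_in_ideal_pow: "0 \<in> ideal_pow m k"
proof (cases k)
  case (Suc n)
  show ?thesis
    unfolding Suc by (rule ideal_pow_SucI[where F = "{}"]) simp_all
qed simp

lemma ideal_pow_add:
  assumes "x \<in> ideal_pow m k" "y \<in> ideal_pow m k"
  shows "x + y \<in> ideal_pow m k"
proof (cases k)
  case (Suc n)
  obtain F1 :: "nat set" and a1 c1 where F1: "finite F1" "\<forall>j\<in>F1. a1 j \<in> m \<and> c1 j \<in> ideal_pow m n"
    and x: "x = (\<Sum>j\<in>F1. a1 j * c1 j)"
    using assms(1) unfolding Suc by (rule ideal_pow_SucE)
  obtain F2 :: "nat set" and a2 c2 where F2: "finite F2" "\<forall>j\<in>F2. a2 j \<in> m \<and> c2 j \<in> ideal_pow m n"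
    and y: "y = (\<Sum>j\<in>F2. a2 j * c2 j)"
    using assms(2) unfolding Suc by (rule ideal_pow_SucE)
  obtain N where N: "\<forall>j\<in>F1. j < N"
    using F1(1) finite_nat_set_iff_bounded by blast
  define a where "a j = (if j < N then a1 j else a2 (j - N))" for j
  define c where "c j = (if j < N then c1 j else c2 (j - N))" for j
  let ?F2' = "(\<lambda>j. j + N) ` F2"
  have disjoint: "F1 \<inter> ?F2' = {}"
    using N by fastforce
  have "x = (\<Sum>j\<in>F1. a j * c j)"
    unfolding x using N by (intro sum.cong) (simp_all add: a_def c_def)
  moreover have "y = (\<Sum>j\<in>?F2'. a j * c j)"
    unfolding y by (subst sum.reindex) (simp_all add: inj_on_def a_def c_def)
  ultimately have "x + y = (\<Sum>j\<in>F1 \<union> ?F2'. a j * c j)"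
    using F1(1) F2(1) disjoint by (simp add: sum.union_disjoint)
  moreover have "a j \<in> m \<and> c j \<in> ideal_pow m n" if "j \<in> F1 \<union> ?F2'" for j
    using that N F1(2) F2(2) unfolding a_def c_def by fastforce
  ultimately show ?thesis
    unfolding Suc using F1(1) F2(1) by (intro ideal_pow_SucI[where a = a and c = c]) auto
qed simp

lemma ideal_pow_mult_left:
  assumes "is_ideal m" "x \<in> ideal_pow m k"
  shows "r * x \<in> ideal_pow m k"
proof (cases k)
  case (Suc n)
  obtain F :: "nat set" and a c where F: "finite F" "\<forall>j\<in>F. a j \<in> m \<and> c j \<in> ideal_pow m n"
    and x: "x = (\<Sum>j\<in>F. a j * c j)"
    using assms(2) unfolding Suc by (rule ideal_pow_SucE)
  have "r * x = (\<Sum>j\<in>F. (r * a j) * c j)"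
    by (simp add: x sum_distrib_left mult.assoc)
  moreover have "r * a j \<in> m" if "j \<in> F" for j
    using F(2) that assms(1) by (simp add: is_ideal_def)
  ultimately show ?thesis
    unfolding Suc using F by (intro ideal_pow_SucI[where a = "\<lambda>j. r * a j" and c = c]) auto
qed simp

lemma ideal_pow_antimono: "p \<le> q \<Longrightarrow> ideal_pow m q \<subseteq> ideal_pow m p"
proof (induction q arbitrary: p)
  case (Suc q)
  have "ideal_pow m (Suc q) \<subseteq> ideal_pow m (Suc p')" if "p' \<le> q" for p'
  proof
    fix x assume "x \<in> ideal_pow m (Suc q)"
    then obtain F :: "nat set" and a c where F: "finite F" "\<forall>j\<in>F. a j \<in> m \<and> c j \<in> ideal_pow m q"
      and x: "x = (\<Sum>j\<in>F. a j * c j)"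
      by (rule ideal_pow_SucE)
    show "x \<in> ideal_pow m (Suc p')"
      using F Suc.IH[OF that] by (intro ideal_pow_SucI[OF _ _ x]) auto
  qed
  then show ?case
    using Suc.prems by (cases p) auto
qed simp

lemma ideal_pow_mult:
  assumes "is_ideal m" "a \<in> ideal_pow m p" "c \<in> ideal_pow m q"
  shows "a * c \<in> ideal_pow m (p + q)"
  using assms(2)
proof (induction p arbitrary: a)
  case 0
  then show ?case using ideal_pow_mult_left[OF assms(1,3)] by simp
next
  case (Suc p)
  from Suc.prems obtain F :: "nat set" and a' c' where F: "finite F" "\<forall>j\<in>F. a' j \<in> m \<and> c' j \<in> ideal_pow m p"
    and a: "a = (\<Sum>j\<in>F. a' j * c' j)"
    by (rule ideal_pow_SucE)
  have "a * c = (\<Sum>j\<in>F. a' j * (c' j * c))"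
    by (simp add: a sum_distrib_right mult.assoc)
  then show ?case
    unfolding add_Suc using F Suc.IH by (intro ideal_pow_SucI[where a = a' and F = F]) auto
qed

lemma ideal_subset_ideal_pow_1: "m \<subseteq> ideal_pow m 1"
proof
  fix x assume "x \<in> m"
  then show "x \<in> ideal_pow m 1"
    unfolding One_nat_def by (intro ideal_pow_SucI[where F = "{0}" and a = "\<lambda>_. x" and c = "\<lambda>_. 1"]) auto
qed

section \<open>The completed tensor product\<close>

lemma sum_fun_apply: "(\<Sum>j\<in>F. f j) x = (\<Sum>j\<in>F. f j x)"
  by (induction F rule: infinite_finite_induct) auto

lemma zero_in_ctensor: "0 \<in> ctensor m"
  by (simp add: ctensor_def zero_in_ideal_pow)

lemma ctensor_add:
  assumes "f \<in> ctensor m" "g \<in> ctensor m"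
  shows "f + g \<in> ctensor m"
  unfolding ctensor_def mem_Collect_eq
proof
  fix k
  have "finite ({i. f i \<notin> ideal_pow m k} \<union> {i. g i \<notin> ideal_pow m k})"
    using assms by (simp add: ctensor_def)
  then show "finite {i. (f + g) i \<notin> ideal_pow m k}"
    by (rule finite_subset[rotated]) (auto intro: ideal_pow_add)
qed

lemma ctensor_smult:
  assumes "is_ideal m" "f \<in> ctensor m"
  shows "smult_ct b f \<in> ctensor m"
  unfolding ctensor_def mem_Collect_eq
proof
  fix k
  have "finite {i. f i \<notin> ideal_pow m k}"
    using assms(2) by (simp add: ctensor_def)
  then show "finite {i. smult_ct b f i \<notin> ideal_pow m k}"
    by (rule finite_subset[rotated]) (auto simp: smult_ct_def intro: ideal_pow_mult_left[OF assms(1)])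
qed

lemma zero_in_mpowX: "0 \<in> mpowX m k"
  by (simp add: mpowX_def zero_in_ctensor zero_in_ideal_pow)

lemma mpowX_0: "mpowX m 0 = ctensor m"
  by (auto simp: mpowX_def)

lemma mpowX_add: "f \<in> mpowX m k \<Longrightarrow> g \<in> mpowX m k \<Longrightarrow> f + g \<in> mpowX m k"
  by (simp add: mpowX_def ctensor_add ideal_pow_add)

lemma mpowX_sum: "(\<And>j. j \<in> F \<Longrightarrow> f j \<in> mpowX m k) \<Longrightarrow> (\<Sum>j\<in>F. f j) \<in> mpowX m k"
  by (induction F rule: infinite_finite_induct) (auto simp: zero_in_mpowX mpowX_add)

lemma mpowX_antimono: "p \<le> q \<Longrightarrow> mpowX m q \<subseteq> mpowX m p"
  using ideal_pow_antimono[of p q m] by (auto simp: mpowX_def)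

lemma smult_ct_in_mpowX:
  assumes "is_ideal m" "b \<in> ideal_pow m p" "f \<in> mpowX m q"
  shows "smult_ct b f \<in> mpowX m (p + q)"
proof -
  have "smult_ct b f \<in> ctensor m"
    using assms by (simp add: mpowX_def ctensor_smult)
  moreover have "smult_ct b f i \<in> ideal_pow m (p + q)" for i
    using assms by (simp add: mpowX_def smult_ct_def ideal_pow_mult)
  ultimately show ?thesis
    by (simp add: mpowX_def)
qed

lemma smult_ct_minus_one: "smult_ct (- 1) f = - f"
  by (auto simp: smult_ct_def)

lemma mpowX_uminus: "is_ideal m \<Longrightarrow> f \<in> mpowX m k \<Longrightarrow> - f \<in> mpowX m k"
  using smult_ct_in_mpowX[of m "- 1" 0 f k] by (simp add: smult_ct_minus_one)

lemma mpowX_diff: "is_ideal m \<Longrightarrow> f \<in> mpowX m k \<Longrightarrow> g \<in> mpowX m k \<Longrightarrow> f - g \<in> mpowX m k"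
  using mpowX_add[of f m k "- g"] mpowX_uminus[of m g k] by simp

lemma smult_ct_sum: "smult_ct b (\<Sum>j\<in>F. f j) = (\<Sum>j\<in>F. smult_ct b (f j))"
  by (rule ext) (simp add: smult_ct_def sum_fun_apply sum_distrib_left)

lemma smult_ct_diff: "smult_ct b (f - g) = smult_ct b f - smult_ct b g"
  by (rule ext) (simp add: smult_ct_def algebra_simps)

lemma smult_ct_smult_ct: "smult_ct a (smult_ct b f) = smult_ct (a * b) f"
  by (rule ext) (simp add: smult_ct_def)

lemma smult_ct_0 [simp]: "smult_ct 0 f = 0" "smult_ct b 0 = 0"
  by (auto simp: smult_ct_def)

lemma mconv_iff_eventually:
  "mconv m s l \<longleftrightarrow> (\<forall>k. eventually (\<lambda>n. s n - l \<in> mpowX m k) sequentially)"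
  by (simp add: mconv_def eventually_sequentially)

lemma mconv_eventually_const:
  "eventually (\<lambda>n. s n = l) sequentially \<Longrightarrow> mconv m s l"
  unfolding mconv_iff_eventually by (auto elim: eventually_mono simp: zero_in_mpowX)

lemma mconv_smult:
  assumes "is_ideal m" "mconv m s l"
  shows "mconv m (\<lambda>n. smult_ct b (s n)) (smult_ct b l)"
proof -
  have "smult_ct b (s n) - smult_ct b l \<in> mpowX m k" if "s n - l \<in> mpowX m k" for n k
    using smult_ct_in_mpowX[OF assms(1), of b 0 "s n - l" k] that by (simp add: smult_ct_diff)
  then show ?thesis
    using assms(2) unfolding mconv_def by blast
qed

lemma mconv_diff_const:
  assumes "mconv m s l" "eventually (\<lambda>n. t n = s n - a) sequentially"
  shows "mconv m t (l - a)"
  using assms unfolding mconv_iff_eventually by (auto elim: eventually_elim2)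

lemma mconv_const_diff:
  assumes "is_ideal m" "mconv m s l"
  shows "mconv m (\<lambda>n. a - s n) (a - l)"
proof -
  have "(a - s n) - (a - l) = - (s n - l)" for n
    by simp
  then show ?thesis
    using assms(2) mpowX_uminus[OF assms(1)] unfolding mconv_def by metis
qed

section \<open>Convergent combinations with coefficients in powers of the ideal\<close>

lemma mpowYI:
  assumes "\<And>j. y j \<in> Y" "\<And>j. c \<le> \<kappa> j" "\<And>j. b j \<in> ideal_pow m (\<kappa> j)"
    and "filterlim \<kappa> at_top sequentially"
    and "mconv m (\<lambda>n. \<Sum>j<n. smult_ct (b j) (y j)) s"
  shows "s \<in> mpowY m c Y"
  using assms unfolding mpowY_def by blast

lemma mpowYE:
  assumes "s \<in> mpowY m c Y"
  obtains y and \<kappa> :: "nat \<Rightarrow> nat" and b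
  where "\<forall>j. y j \<in> Y" "\<forall>j. c \<le> \<kappa> j" "\<forall>j. b j \<in> ideal_pow m (\<kappa> j)"
    and "filterlim \<kappa> at_top sequentially"
    and "mconv m (\<lambda>n. \<Sum>j<n. smult_ct (b j) (y j)) s"
  using assms unfolding mpowY_def by blast

lemma mpowY_antimono:
  assumes "c \<le> c'"
  shows "mpowY m c' Y \<subseteq> mpowY m c Y"
proof
  fix s assume "s \<in> mpowY m c' Y"
  then obtain y \<kappa> b where "\<forall>j. y j \<in> Y" "\<forall>j. c' \<le> \<kappa> j" "\<forall>j. b j \<in> ideal_pow m (\<kappa> j)"
    "filterlim \<kappa> at_top sequentially" "mconv m (\<lambda>n. \<Sum>j<n. smult_ct (b j) (y j)) s"
    by (rule mpowYE)
  then show "s \<in> mpowY m c Y"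
    using assms by (intro mpowYI[of y Y c \<kappa> b]) (auto intro: order_trans)
qed

lemma mpowY_subset_mpowX:
  assumes "is_ideal m" "Y \<subseteq> ctensor m"
  shows "mpowY m c Y \<subseteq> mpowX m c"
proof
  fix s assume "s \<in> mpowY m c Y"
  then obtain y \<kappa> b where y: "\<forall>j. y j \<in> Y" and \<kappa>: "\<forall>j. c \<le> \<kappa> j" "\<forall>j. b j \<in> ideal_pow m (\<kappa> j)"
    and "filterlim \<kappa> at_top sequentially" and conv: "mconv m (\<lambda>n. \<Sum>j<n. smult_ct (b j) (y j)) s"
    by (rule mpowYE)
  have partial_sums: "(\<Sum>j<n. smult_ct (b j) (y j)) \<in> mpowX m c" for n
  proof (rule mpowX_sum)
    fix j
    have "b j \<in> ideal_pow m c" using \<kappa> ideal_pow_antimono[of c "\<kappa> j" m] by auto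
    then show "smult_ct (b j) (y j) \<in> mpowX m c"
      using smult_ct_in_mpowX[OF assms(1), of "b j" c "y j" 0] y assms(2) by (auto simp: mpowX_0)
  qed
  obtain N where "(\<Sum>j<N. smult_ct (b j) (y j)) - s \<in> mpowX m c"
    using conv unfolding mconv_def by blast
  from mpowX_diff[OF assms(1) partial_sums[of N] this] show "s \<in> mpowX m c" by simp
qed

lemma smult_ct_in_mpowY:
  assumes "b \<in> ideal_pow m c" "y \<in> Y"
  shows "smult_ct b y \<in> mpowY m c Y"
proof (rule mpowYI)
  let ?b = "\<lambda>j::nat. if j = 0 then b else 0"
  show "?b j \<in> ideal_pow m (c + j)" for j
    using assms by (simp add: zero_in_ideal_pow)
  show "filterlim (\<lambda>j. c + j) at_top sequentially"
    by (rule filterlim_at_top_mono[OF filterlim_ident]) auto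
  have "(\<Sum>j<n. smult_ct (?b j) y) = (\<Sum>j<n. if j = 0 then smult_ct b y else 0)" for n
    by (rule sum.cong) auto
  then have "(\<Sum>j<n. smult_ct (?b j) y) = smult_ct b y" if "n \<ge> 1" for n
    using that by simp
  then show "mconv m (\<lambda>n. \<Sum>j<n. smult_ct (?b j) ((\<lambda>_. y) j)) (smult_ct b y)"
    by (intro mconv_eventually_const eventually_sequentiallyI[of 1]) simp
qed (use assms in auto)

lemma zero_in_mpowY: "y \<in> Y \<Longrightarrow> 0 \<in> mpowY m c Y"
  using smult_ct_in_mpowY[OF zero_in_ideal_pow] by fastforce

lemma mpowY_smult:
  assumes "is_ideal m" "e \<in> ideal_pow m p" "x \<in> mpowY m c Y"
  shows "smult_ct e x \<in> mpowY m (c + p) Y"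
proof -
  obtain y \<kappa> b where y: "\<forall>j. y j \<in> Y" and \<kappa>: "\<forall>j. c \<le> \<kappa> j" "\<forall>j. b j \<in> ideal_pow m (\<kappa> j)"
    and lim: "filterlim \<kappa> at_top sequentially"
    and conv: "mconv m (\<lambda>n. \<Sum>j<n. smult_ct (b j) (y j)) x"
    using assms(3) by (rule mpowYE)
  show ?thesis
  proof (rule mpowYI)
    show "e * b j \<in> ideal_pow m (p + \<kappa> j)" for j
      using ideal_pow_mult[OF assms(1,2) \<kappa>(2)[rule_format]] .
    show "filterlim (\<lambda>j. p + \<kappa> j) at_top sequentially"
      by (rule filterlim_at_top_mono[OF lim]) auto
    show "mconv m (\<lambda>n. \<Sum>j<n. smult_ct (e * b j) (y j)) (smult_ct e x)"
      using mconv_smult[OF assms(1) conv, of e] by (simp add: smult_ct_sum smult_ct_smult_ct)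
  qed (use y \<kappa> in auto)
qed

lemma mpowY_split:
  assumes "x \<in> mpowY m c Y"
  obtains N :: nat and y b where "\<forall>j<N. y j \<in> Y \<and> b j \<in> ideal_pow m c"
    and "x - (\<Sum>j<N. smult_ct (b j) (y j)) \<in> mpowY m c' Y"
proof -
  obtain y \<kappa> b where y: "\<forall>j. y j \<in> Y" and \<kappa>: "\<forall>j. c \<le> \<kappa> j" "\<forall>j. b j \<in> ideal_pow m (\<kappa> j)"
    and lim: "filterlim \<kappa> at_top sequentially"
    and conv: "mconv m (\<lambda>n. \<Sum>j<n. smult_ct (b j) (y j)) x"
    using assms by (rule mpowYE)
  obtain N where N: "\<And>j. j \<ge> N \<Longrightarrow> c' \<le> \<kappa> j"
    using lim unfolding filterlim_at_top eventually_sequentially by blast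
  define tail where "tail j = (if j < N then 0 else b j)" for j
  have rest: "x - (\<Sum>j<N. smult_ct (b j) (y j)) \<in> mpowY m c' Y"
  proof (rule mpowYI)
    show "tail j \<in> ideal_pow m (max c' (\<kappa> j))" for j
      using N \<kappa>(2)[rule_format] by (simp add: tail_def zero_in_ideal_pow max_absorb2)
    show "filterlim (\<lambda>j. max c' (\<kappa> j)) at_top sequentially"
      by (rule filterlim_at_top_mono[OF lim]) auto
    have "(\<Sum>j<n. smult_ct (tail j) (y j)) = (\<Sum>j<n. smult_ct (b j) (y j)) - (\<Sum>j<N. smult_ct (b j) (y j))"
      if "N \<le> n" for n
    proof -
      have split: "{..<n} = {..<N} \<union> {N..<n}" "{..<N} \<inter> {N..<n} = {}"
        using that by auto
      have "(\<Sum>j<n. smult_ct (tail j) (y j)) = (\<Sum>j\<in>{N..<n}. smult_ct (b j) (y j))"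
        unfolding split(1) by (simp add: sum.union_disjoint[OF _ _ split(2)] tail_def)
      also have "\<dots> = (\<Sum>j<n. smult_ct (b j) (y j)) - (\<Sum>j<N. smult_ct (b j) (y j))"
        unfolding split(1) by (simp add: sum.union_disjoint[OF _ _ split(2)])
      finally show ?thesis .
    qed
    then show "mconv m (\<lambda>n. \<Sum>j<n. smult_ct (tail j) (y j)) (x - (\<Sum>j<N. smult_ct (b j) (y j)))"
      by (intro mconv_diff_const[OF conv] eventually_sequentiallyI)
  qed (use y in auto)
  have "y j \<in> Y \<and> b j \<in> ideal_pow m c" for j
    using y \<kappa> ideal_pow_antimono[of c "\<kappa> j" m] by auto
  then show ?thesis
    using rest by (intro that[where N = N and b = b and y = y]) auto
qed

lemma eventually_prod_decode:
  assumes "eventually P cofinite"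
  shows "eventually (\<lambda>j. P (prod_decode j)) sequentially"
proof -
  have "finite (prod_decode -` {p. \<not> P p})"
    using assms unfolding eventually_cofinite by (rule finite_vimageI) (rule inj_prod_decode)
  then show ?thesis
    unfolding cofinite_eq_sequentially[symmetric] eventually_cofinite by simp
qed

lemma eventually_subset_prod_decode:
  assumes "finite A"
  shows "eventually (\<lambda>n. A \<subseteq> prod_decode ` {..<n}) sequentially"
proof -
  obtain N where N: "\<forall>j\<in>prod_encode ` A. j < N"
    using assms finite_nat_set_iff_bounded by blast
  show ?thesis
  proof (rule eventually_sequentiallyI)
    fix n assume "N \<le> n"
    show "A \<subseteq> prod_decode ` {..<n}"
    proof
      fix p assume "p \<in> A"
      then have "prod_encode p \<in> {..<n}"
        using N \<open>N \<le> n\<close> by force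
      then show "p \<in> prod_decode ` {..<n}"
        by (rule image_eqI[rotated]) simp
    qed
  qed
qed

lemma eventually_cofinite_pairs_ge:
  fixes \<kappa> :: "nat \<Rightarrow> nat \<Rightarrow> nat"
  assumes rows: "\<And>k. filterlim (\<kappa> k) at_top sequentially"
    and lim: "filterlim \<phi> at_top sequentially" and ge: "\<And>k i. \<phi> k \<le> \<kappa> k i"
  shows "eventually (\<lambda>p. Z \<le> \<kappa> (fst p) (snd p)) cofinite"
proof -
  obtain k0 where k0: "\<And>k. k0 \<le> k \<Longrightarrow> Z \<le> \<phi> k"
    using lim unfolding filterlim_at_top eventually_sequentially by blast
  have "\<forall>k. \<exists>n. \<forall>i\<ge>n. Z \<le> \<kappa> k i"
    using rows unfolding filterlim_at_top eventually_sequentially by blast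
  then obtain nn where nn: "\<And>k i. nn k \<le> i \<Longrightarrow> Z \<le> \<kappa> k i"
    by metis
  have "{p. \<not> Z \<le> \<kappa> (fst p) (snd p)} \<subseteq> (SIGMA k:{..<k0}. {..<nn k})"
  proof (clarsimp)
    fix k i assume "\<not> Z \<le> \<kappa> k i"
    then show "k < k0 \<and> i < nn k"
      using k0 nn ge[of k i] by (meson le_trans not_le)
  qed
  then show ?thesis
    unfolding eventually_cofinite by (rule finite_subset) auto
qed

lemma eventually_sequentially_ex_ge: "eventually P sequentially \<Longrightarrow> \<exists>n\<ge>a. P n"
  unfolding eventually_sequentially by (metis max.cobounded1 max.cobounded2)

lemma finite_subset_lessThan_square:
  fixes E :: "(nat \<times> nat) set"
  assumes "finite E"
  shows "\<exists>a. E \<subseteq> {..<a} \<times> {..<a}"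
proof -
  obtain a where "\<forall>j\<in>fst ` E \<union> snd ` E. j < a"
    using assms finite_nat_set_iff_bounded by (meson finite_UnI finite_imageI)
  then have "E \<subseteq> {..<a} \<times> {..<a}"
    by (fastforce intro: rev_image_eqI)
  then show ?thesis ..
qed

lemma mconv_prod_decode:
  assumes rows: "\<And>k. mconv m (\<lambda>n. \<Sum>i<n. t (k, i)) (d k)"
    and cols: "mconv m (\<lambda>n. \<Sum>k<n. d k) s"
    and small: "\<And>K. eventually (\<lambda>p. t p \<in> mpowX m K) cofinite"
  shows "mconv m (\<lambda>n. \<Sum>j<n. t (prod_decode j)) s"
  unfolding mconv_iff_eventually
proof
  fix K
  obtain a where a: "{p. t p \<notin> mpowX m K} \<subseteq> {..<a} \<times> {..<a}"
    using finite_subset_lessThan_square small[of K] unfolding eventually_cofinite by blast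
  obtain k0 where k0: "a \<le> k0" "(\<Sum>k<k0. d k) - s \<in> mpowX m K"
    using eventually_sequentially_ex_ge[of _ a] cols unfolding mconv_iff_eventually by blast
  have "\<forall>k. \<exists>n\<ge>a. (\<Sum>i<n. t (k, i)) - d k \<in> mpowX m K"
    using eventually_sequentially_ex_ge[of _ a] rows unfolding mconv_iff_eventually by blast
  then obtain nn where nn: "\<And>k. a \<le> nn k" "\<And>k. (\<Sum>i<nn k. t (k, i)) - d k \<in> mpowX m K"
    by metis
  define A where "A = (SIGMA k:{..<k0}. {..<nn k})"
  have "finite A"
    by (simp add: A_def)
  then show "eventually (\<lambda>n. (\<Sum>j<n. t (prod_decode j)) - s \<in> mpowX m K) sequentially"
  proof (rule eventually_mono[OF eventually_subset_prod_decode])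
    fix n assume "A \<subseteq> prod_decode ` {..<n}"
    define D where "D = prod_decode ` {..<n}"
    have "(\<Sum>j<n. t (prod_decode j)) = (\<Sum>p\<in>D. t p)"
      by (simp add: D_def sum.reindex[OF inj_prod_decode])
    also have "\<dots> = (\<Sum>p\<in>D - A. t p) + (\<Sum>p\<in>A. t p)"
      using \<open>A \<subseteq> prod_decode ` {..<n}\<close> by (intro sum.subset_diff) (simp_all add: D_def)
    also have "\<dots> = (\<Sum>p\<in>D - A. t p) + (\<Sum>k<k0. \<Sum>i<nn k. t (k, i))"
      by (simp add: A_def sum.Sigma)
    finally have eq: "(\<Sum>j<n. t (prod_decode j)) - s
        = (\<Sum>p\<in>D - A. t p) + (\<Sum>k<k0. (\<Sum>i<nn k. t (k, i)) - d k) + ((\<Sum>k<k0. d k) - s)"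
      by (simp add: sum_subtractf algebra_simps)
    have "t p \<in> mpowX m K" if "p \<in> D - A" for p
    proof (rule ccontr)
      assume "t p \<notin> mpowX m K"
      then have "fst p < k0 \<and> snd p < nn (fst p)"
        using a k0(1) nn(1)[of "fst p"] by auto
      then show False
        using that by (cases p) (auto simp: A_def)
    qed
    then have "(\<Sum>p\<in>D - A. t p) + (\<Sum>k<k0. (\<Sum>i<nn k. t (k, i)) - d k) + ((\<Sum>k<k0. d k) - s)
        \<in> mpowX m K"
      using nn(2) k0(2) by (intro mpowX_add mpowX_sum) auto
    then show "(\<Sum>j<n. t (prod_decode j)) - s \<in> mpowX m K"
      by (simp only: eq)
  qed
qed

lemma smult_ct_in_mpowX_of_le:
  assumes "is_ideal m" "b \<in> ideal_pow m q" "f \<in> ctensor m" "p \<le> q"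
  shows "smult_ct b f \<in> mpowX m p"
  using smult_ct_in_mpowX[OF assms(1,2), of f 0] mpowX_antimono[OF assms(4)] assms(3)
  by (auto simp: mpowX_0)

lemma mpowY_series:
  assumes "is_ideal m" "Y \<subseteq> ctensor m"
    and d: "\<And>k. d k \<in> mpowY m (\<phi> k) Y" and c: "\<And>k. c \<le> \<phi> k"
    and lim: "filterlim \<phi> at_top sequentially"
    and conv: "mconv m (\<lambda>n. \<Sum>k<n. d k) s"
  shows "s \<in> mpowY m c Y"
proof -
  have "\<forall>k. \<exists>y \<kappa> b. (\<forall>j. y j \<in> Y) \<and> (\<forall>j. \<phi> k \<le> \<kappa> j) \<and> (\<forall>j. b j \<in> ideal_pow m (\<kappa> j))
      \<and> filterlim \<kappa> at_top sequentially \<and> mconv m (\<lambda>n. \<Sum>j<n. smult_ct (b j) (y j)) (d k)"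
    using d unfolding mpowY_def by blast
  then obtain y \<kappa> b where "\<forall>k. (\<forall>j. y k j \<in> Y) \<and> (\<forall>j. \<phi> k \<le> \<kappa> k j) \<and> (\<forall>j. b k j \<in> ideal_pow m (\<kappa> k j))
      \<and> filterlim (\<kappa> k) at_top sequentially \<and> mconv m (\<lambda>n. \<Sum>j<n. smult_ct (b k j) (y k j)) (d k)"
    unfolding choice_iff by blast
  then have y: "\<And>k j. y k j \<in> Y" and \<kappa>: "\<And>k j. \<phi> k \<le> \<kappa> k j"
    and b: "\<And>k j. b k j \<in> ideal_pow m (\<kappa> k j)" and rows: "\<And>k. filterlim (\<kappa> k) at_top sequentially"
    and conv_rows: "\<And>k. mconv m (\<lambda>n. \<Sum>j<n. smult_ct (b k j) (y k j)) (d k)"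
    by auto
  define t where "t = (\<lambda>(k, i). smult_ct (b k i) (y k i))"
  have large: "eventually (\<lambda>p. Z \<le> \<kappa> (fst p) (snd p)) cofinite" for Z
    using rows lim \<kappa> by (rule eventually_cofinite_pairs_ge)
  show ?thesis
  proof (rule mpowYI)
    show "y (fst (prod_decode j)) (snd (prod_decode j)) \<in> Y" for j
      by (rule y)
    show "b (fst (prod_decode j)) (snd (prod_decode j)) \<in> ideal_pow m (\<kappa> (fst (prod_decode j)) (snd (prod_decode j)))" for j
      by (rule b)
    show "c \<le> \<kappa> (fst (prod_decode j)) (snd (prod_decode j))" for j
      using c \<kappa> by (rule order_trans)
    show "filterlim (\<lambda>j. \<kappa> (fst (prod_decode j)) (snd (prod_decode j))) at_top sequentially"
      unfolding filterlim_at_top using large by (intro allI eventually_prod_decode)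
    have "eventually (\<lambda>p. t p \<in> mpowX m K) cofinite" for K
    proof (rule eventually_mono[OF large])
      fix p assume "K \<le> \<kappa> (fst p) (snd p)"
      then show "t p \<in> mpowX m K"
        using b y assms(2) unfolding t_def split_beta by (blast intro: smult_ct_in_mpowX_of_le[OF assms(1)])
    qed
    then have "mconv m (\<lambda>n. \<Sum>j<n. t (prod_decode j)) s"
      using conv_rows conv by (intro mconv_prod_decode) (simp_all add: t_def)
    then show "mconv m (\<lambda>n. \<Sum>j<n. smult_ct (b (fst (prod_decode j)) (snd (prod_decode j)))
        (y (fst (prod_decode j)) (snd (prod_decode j)))) s"
      by (simp add: t_def split_beta)
  qed
qed

lemma mpowY_add:
  assumes "is_ideal m" "Y \<subseteq> ctensor m" "x \<in> mpowY m c Y" "x' \<in> mpowY m c Y"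
  shows "x + x' \<in> mpowY m c Y"
proof -
  obtain y0 where "y0 \<in> Y"
    using assms(3) unfolding mpowY_def by blast
  define d where "d k = (if k = 0 then x else if k = 1 then x' else 0)" for k :: nat
  have sums: "(\<Sum>k<Suc (Suc n). d k) = x + x'" for n
    by (induction n) (simp_all add: d_def)
  show ?thesis
  proof (rule mpowY_series[OF assms(1,2)])
    show "d k \<in> mpowY m (if k \<le> 1 then c else c + k) Y" for k
      using assms(3,4) zero_in_mpowY[OF \<open>y0 \<in> Y\<close>] by (auto simp: d_def)
    show "filterlim (\<lambda>k. if k \<le> 1 then c else c + k) at_top sequentially"
      by (rule filterlim_at_top_mono[OF filterlim_ident]) (auto intro: eventually_sequentiallyI[of 2])
    show "mconv m (\<lambda>n. \<Sum>k<n. d k) (x + x')"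
      by (rule mconv_eventually_const, rule eventually_sequentiallyI[of 2]) (metis sums add_2_eq_Suc le_Suc_ex)
  qed simp
qed

lemma mpowY_sum:
  assumes "is_ideal m" "Y \<subseteq> ctensor m" "Y \<noteq> {}" "\<And>j. j \<in> F \<Longrightarrow> f j \<in> mpowY m c Y"
  shows "(\<Sum>j\<in>F. f j) \<in> mpowY m c Y"
proof -
  obtain y0 where "y0 \<in> Y"
    using assms(3) by blast
  show ?thesis
    using assms(4)
  proof (induction F rule: infinite_finite_induct)
    case (insert j F)
    then show ?case
      unfolding sum.insert[OF insert.hyps] by (intro mpowY_add[OF assms(1,2)]) auto
  qed (simp_all add: zero_in_mpowY[OF \<open>y0 \<in> Y\<close>])
qed

lemma mpowY_telescope:
  assumes "is_ideal m" "Y \<subseteq> ctensor m"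
    and "\<And>n. r n - r (Suc n) \<in> mpowY m (c + n) Y" and "mconv m r l"
  shows "r 0 - l \<in> mpowY m c Y"
proof (rule mpowY_series[OF assms(1,2,3)])
  show "filterlim (\<lambda>n. c + n) at_top sequentially"
    by (rule filterlim_at_top_mono[OF filterlim_ident]) auto
  show "mconv m (\<lambda>n. \<Sum>k<n. r k - r (Suc k)) (r 0 - l)"
    unfolding sum_lessThan_telescope' by (rule mconv_const_diff[OF assms(1,4)])
qed simp

lemma sum_smult_ct_eliminate:
  assumes "finite F" "j \<in> F" "w j l * u = 1"
  shows "(\<Sum>i\<in>F. smult_ct (e i) (w i))
    = smult_ct (u * (\<Sum>i\<in>F. e i * w i l)) (w j)
      + (\<Sum>i\<in>F - {j}. smult_ct (e i) (w i - smult_ct (w i l * u) (w j)))"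
proof -
  have "(\<Sum>i\<in>F. smult_ct (e i) (w i - smult_ct (w i l * u) (w j)))
      = (\<Sum>i\<in>F. smult_ct (e i) (w i)) - smult_ct (u * (\<Sum>i\<in>F. e i * w i l)) (w j)"
  proof
    fix x
    show "(\<Sum>i\<in>F. smult_ct (e i) (w i - smult_ct (w i l * u) (w j))) x
      = ((\<Sum>i\<in>F. smult_ct (e i) (w i)) - smult_ct (u * (\<Sum>i\<in>F. e i * w i l)) (w j)) x"
      by (simp add: smult_ct_def sum_fun_apply right_diff_distrib sum_subtractf
          sum_distrib_left sum_distrib_right ac_simps)
  qed
  moreover have "w j - smult_ct (w j l * u) (w j) = 0"
    using assms(3) by (auto simp: smult_ct_def)
  ultimately show ?thesis
    using assms(1,2) by (simp add: sum.remove)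
qed

section \<open>Pseudoclosed submodules\<close>

locale pseudoclosed_submodule =
  fixes m :: "'b::comm_ring_1 set" and M :: "('i \<Rightarrow> 'b) set"
  assumes ideal: "is_ideal m" and submodule: "B_submodule m M" and pseudoclosed: "pseudoclosed m M"
begin

lemma subset_ctensor: "M \<subseteq> ctensor m"
  using submodule by (simp add: B_submodule_def)

lemma zero_mem: "0 \<in> M"
  using submodule by (simp add: B_submodule_def)

lemma add_mem: "x \<in> M \<Longrightarrow> y \<in> M \<Longrightarrow> x + y \<in> M"
  using submodule by (simp add: B_submodule_def)

lemma smult_mem: "x \<in> M \<Longrightarrow> smult_ct b x \<in> M"
  using submodule by (simp add: B_submodule_def)

lemma diff_mem: "x \<in> M \<Longrightarrow> y \<in> M \<Longrightarrow> x - y \<in> M"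
  using add_mem[of x "smult_ct (- 1) y"] smult_mem[of y "- 1"] by (simp add: smult_ct_minus_one)

lemma mpowY_subset: "mpowY m c M \<subseteq> M"
  using mpowY_antimono[of 0 c m M] pseudoclosed by (simp add: pseudoclosed_def BY_def)

lemma mpowY_subset_mpowX: "mpowY m c M \<subseteq> mpowX m c"
  using ideal subset_ctensor by (rule mpowY_subset_mpowX)

lemma sum_smult_ct_in_mpowY:
  assumes "\<And>i. i \<in> F \<Longrightarrow> e i \<in> ideal_pow m k" and "\<And>i. i \<in> F \<Longrightarrow> w i \<in> mpowY m 1 M"
  shows "(\<Sum>i\<in>F. smult_ct (e i) (w i)) \<in> mpowY m (Suc k) M"
proof (rule mpowY_sum[OF ideal subset_ctensor])
  show "M \<noteq> {}"
    using zero_mem by blast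
  show "smult_ct (e i) (w i) \<in> mpowY m (Suc k) M" if "i \<in> F" for i
    using mpowY_smult[OF ideal assms(1)[OF that] assms(2)[OF that]] by simp
qed

lemma quasi_flat_sum_in_mpowY:
  assumes units: "\<And>b. b \<notin> m \<Longrightarrow> \<exists>u. b * u = 1" and qf: "quasi_flat m M"
    and "finite F" and "\<And>i. i \<in> F \<Longrightarrow> e i \<in> ideal_pow m k" and "\<And>i. i \<in> F \<Longrightarrow> w i \<in> M"
    and "(\<Sum>i\<in>F. smult_ct (e i) (w i)) \<in> mpowX m (Suc k)"
  shows "(\<Sum>i\<in>F. smult_ct (e i) (w i)) \<in> mpowY m (Suc k) M"
  using assms(3-)
proof (induction F arbitrary: w rule: finite_remove_induct)
  case empty
  show ?case
    unfolding sum.empty by (rule zero_in_mpowY[OF zero_mem])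
next
  case (remove F)
  let ?S = "\<Sum>i\<in>F. smult_ct (e i) (w i)"
  show ?case
  proof (cases "\<forall>i\<in>F. w i \<in> mpowX m 1")
    case True
    then show ?thesis
      using qf remove.prems(1,2) unfolding quasi_flat_def by (intro sum_smult_ct_in_mpowY) blast+
  next
    case False
    then obtain j where j: "j \<in> F" "w j \<notin> mpowX m 1"
      by blast
    then obtain i0 where "w j i0 \<notin> ideal_pow m 1"
      using subset_ctensor remove.prems(2) by (auto simp: mpowX_def)
    then obtain u where u: "w j i0 * u = 1"
      using units ideal_subset_ideal_pow_1 by blast
    define \<rho> where "\<rho> = u * (\<Sum>i\<in>F. e i * w i i0)"
    define w' where "w' i = w i - smult_ct (w i i0 * u) (w j)" for i
    have "(\<Sum>i\<in>F. e i * w i i0) \<in> ideal_pow m (Suc k)"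
      using remove.prems(3) by (simp add: mpowX_def sum_fun_apply smult_ct_def)
    then have \<rho>: "\<rho> \<in> ideal_pow m (Suc k)"
      unfolding \<rho>_def by (rule ideal_pow_mult_left[OF ideal])
    have rest: "(\<Sum>i\<in>F - {j}. smult_ct (e i) (w' i)) = ?S - smult_ct \<rho> (w j)"
      using sum_smult_ct_eliminate[where e = e and w = w and l = i0 and u = u, OF remove.hyps(1) j(1) u]
      by (simp add: \<rho>_def w'_def)
    have "smult_ct \<rho> (w j) \<in> mpowX m (Suc k)"
      using smult_ct_in_mpowX[OF ideal \<rho>, of "w j" 0] subset_ctensor remove.prems(2) j(1)
      by (auto simp: mpowX_0)
    then have "(\<Sum>i\<in>F - {j}. smult_ct (e i) (w' i)) \<in> mpowX m (Suc k)"
      unfolding rest using remove.prems(3) by (rule mpowX_diff[OF ideal, rotated])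
    moreover have "w' i \<in> M" if "i \<in> F" for i
      unfolding w'_def using remove.prems(2) that j(1) by (intro diff_mem smult_mem) auto
    ultimately have "(\<Sum>i\<in>F - {j}. smult_ct (e i) (w' i)) \<in> mpowY m (Suc k) M"
      using j(1) remove.prems(1) by (intro remove.IH) auto
    moreover have "smult_ct \<rho> (w j) \<in> mpowY m (Suc k) M"
      using \<rho> remove.prems(2)[OF j(1)] by (rule smult_ct_in_mpowY)
    ultimately have "smult_ct \<rho> (w j) + (?S - smult_ct \<rho> (w j)) \<in> mpowY m (Suc k) M"
      unfolding rest using ideal subset_ctensor by (intro mpowY_add)
    then show ?thesis
      by simp
  qed
qed

lemma quasi_flat_imp_mpowY:
  assumes units: "\<And>b. b \<notin> m \<Longrightarrow> \<exists>u. b * u = 1" and qf: "quasi_flat m M" and "1 \<le> k"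
  shows "M \<inter> mpowX m k \<subseteq> mpowY m k M"
  using assms(3)
proof (induction k rule: dec_induct)
  case base
  then show ?case
    using qf by (simp add: quasi_flat_def)
next
  case (step k)
  show ?case
  proof
    fix x assume x: "x \<in> M \<inter> mpowX m (Suc k)"
    then have "x \<in> mpowY m k M"
      using step.IH mpowX_antimono[of k "Suc k" m] by auto
    then obtain N :: nat and y b where coeffs: "\<forall>j<N. y j \<in> M \<and> b j \<in> ideal_pow m k"
      and rest: "x - (\<Sum>j<N. smult_ct (b j) (y j)) \<in> mpowY m (Suc k) M"
      by (rule mpowY_split[where c' = "Suc k"])
    let ?S = "\<Sum>j<N. smult_ct (b j) (y j)"
    from x have "x \<in> mpowX m (Suc k)"
      by blast
    from mpowX_diff[OF ideal this subsetD[OF mpowY_subset_mpowX rest]]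
    have "?S \<in> mpowX m (Suc k)"
      by simp
    then have "?S \<in> mpowY m (Suc k) M"
      using step.hyps(1) coeffs
      by (intro quasi_flat_sum_in_mpowY[OF units qf]) auto
    from mpowY_add[OF ideal subset_ctensor this rest] show "x \<in> mpowY m (Suc k) M"
      by simp
  qed
qed

lemma madic_closed_if_mpowY:
  assumes "\<And>k. 1 \<le> k \<Longrightarrow> M \<inter> mpowX m k \<subseteq> mpowY m k M"
  shows "madic_closed m M"
  unfolding madic_closed_def
proof (intro ballI impI)
  fix x assume "\<forall>k. \<exists>y\<in>M. x - y \<in> mpowX m k"
  then obtain z where z: "\<And>k. z k \<in> M" "\<And>k. x - z k \<in> mpowX m k"
    by metis
  define r where "r n = z (Suc n)" for n
  have "r n - r (Suc n) \<in> mpowY m (1 + n) M" for n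
  proof -
    have "x - z (Suc (Suc n)) \<in> mpowX m (Suc n)"
      using z(2)[of "Suc (Suc n)"] mpowX_antimono[of "Suc n" "Suc (Suc n)" m] by auto
    from mpowX_diff[OF ideal this z(2)[of "Suc n"]]
    have "(x - z (Suc (Suc n))) - (x - z (Suc n)) \<in> mpowX m (Suc n)" .
    moreover have "r n - r (Suc n) \<in> M"
      using z(1) by (simp add: r_def diff_mem)
    ultimately show ?thesis
      using assms[of "1 + n"] by (auto simp: r_def)
  qed
  moreover have "mconv m r x"
    unfolding mconv_iff_eventually
  proof (intro allI eventually_sequentiallyI)
    fix K n :: nat assume "K \<le> n"
    have "- (x - z (Suc n)) \<in> mpowX m K"
      using z(2) mpowX_antimono[of K "Suc n" m] \<open>K \<le> n\<close> by (intro mpowX_uminus[OF ideal]) auto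
    then show "r n - x \<in> mpowX m K"
      by (simp add: r_def)
  qed
  ultimately have "r 0 - x \<in> M"
    using mpowY_telescope[OF ideal subset_ctensor] mpowY_subset by blast
  from diff_mem[OF z(1)[of 1] this[unfolded r_def]] show "x \<in> M"
    by simp
qed

lemma quasi_flat_if_mpowY_plus_mpowX:
  assumes approx: "\<And>k. 1 \<le> k \<Longrightarrow>
    M \<inter> mpowX m k \<subseteq> {x + y | x y. x \<in> mpowY m k M \<and> y \<in> mpowX m (k + 1)}"
  shows "quasi_flat m M"
  unfolding quasi_flat_def
proof
  fix x assume x: "x \<in> M \<inter> mpowX m 1"
  have step: "\<exists>r'. r' \<in> M \<inter> mpowX m (Suc (Suc n)) \<and> r - r' \<in> mpowY m (1 + n) M"
    if "r \<in> M \<inter> mpowX m (Suc n)" for n r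
  proof -
    have "r \<in> {x + y | x y. x \<in> mpowY m (Suc n) M \<and> y \<in> mpowX m (Suc n + 1)}"
      using subsetD[OF approx[of "Suc n"] that] by simp
    then obtain a r' where a: "a \<in> mpowY m (Suc n) M" and r': "r' \<in> mpowX m (Suc (Suc n))" and "r = a + r'"
      by auto
    have "r - a \<in> M"
      using that a mpowY_subset diff_mem by blast
    then show ?thesis
      using \<open>r = a + r'\<close> a r' by (intro exI[of _ r']) auto
  qed
  have "\<exists>r. \<forall>n. (r n \<in> M \<inter> mpowX m (Suc n) \<and> (n = 0 \<longrightarrow> r n = x))
      \<and> r n - r (Suc n) \<in> mpowY m (1 + n) M"
  proof (rule dependent_nat_choice)
    show "\<exists>r. r \<in> M \<inter> mpowX m (Suc 0) \<and> (0 = (0::nat) \<longrightarrow> r = x)"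
      using x by auto
    show "\<exists>r'. (r' \<in> M \<inter> mpowX m (Suc (Suc n)) \<and> (Suc n = 0 \<longrightarrow> r' = x)) \<and> r - r' \<in> mpowY m (1 + n) M"
      if "r \<in> M \<inter> mpowX m (Suc n) \<and> (n = 0 \<longrightarrow> r = x)" for r n
      using step that by blast
  qed
  then obtain r where r: "\<And>n. r n \<in> M \<inter> mpowX m (Suc n) \<and> (n = 0 \<longrightarrow> r n = x)"
    and diffs: "\<And>n. r n - r (Suc n) \<in> mpowY m (1 + n) M"
    by blast
  have "mconv m r 0"
    unfolding mconv_iff_eventually
  proof (intro allI eventually_sequentiallyI)
    fix K n :: nat assume "K \<le> n"
    then show "r n - 0 \<in> mpowX m K"
      using r[of n] mpowX_antimono[of K "Suc n" m] by auto
  qed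
  from mpowY_telescope[OF ideal subset_ctensor diffs this] show "x \<in> mpowY m 1 M"
    using r[of 0] by simp
qed

end

lemma deformation_base_unit:
  assumes "deformation_base \<iota> m" "b \<notin> m"
  shows "\<exists>u. b * u = 1"
proof (rule ccontr)
  assume no_inverse: "\<nexists>u. b * u = 1"
  let ?I = "range (\<lambda>r. b * r)"
  have "is_ideal ?I"
    unfolding is_ideal_def
  proof (intro conjI ballI allI)
    show "0 \<in> ?I"
      using mult_zero_right[of b, symmetric] by (rule range_eqI)
    fix x y assume "x \<in> ?I" "y \<in> ?I"
    then obtain r s where "x = b * r" "y = b * s"
      by blast
    then have "x + y = b * (r + s)"
      by (simp add: distrib_left)
    then show "x + y \<in> ?I"
      by (rule range_eqI)
  next
    fix r x assume "x \<in> ?I"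
    then obtain s where "x = b * s"
      by blast
    then have "r * x = b * (r * s)"
      by (simp add: mult.left_commute)
    then show "r * x \<in> ?I"
      by (rule range_eqI)
  qed
  moreover have "1 \<notin> ?I"
  proof
    assume "1 \<in> ?I"
    then obtain u where "1 = b * u"
      by blast
    then have "b * u = 1"
      by (rule sym)
    with no_inverse show False
      by blast
  qed
  moreover have "\<forall>I. is_ideal I \<and> I \<noteq> UNIV \<longrightarrow> I \<subseteq> m"
    using assms(1) by (simp add: deformation_base_def)
  ultimately have "?I \<subseteq> m"
    by blast
  moreover have "b \<in> ?I"
    using mult_1_right[of b, symmetric] by (rule range_eqI)
  ultimately show False
    using assms(2) by blast
qed

theorem proposition2p43:
  fixes \<iota> :: "complex \<Rightarrow> 'b::comm_ring_1"
    and m :: "'b set"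
    and M :: "('i \<Rightarrow> 'b) set"
  assumes "deformation_base \<iota> m"
    and "B_submodule m M"
    and "pseudoclosed m M"
  shows "(quasi_flat m M \<longleftrightarrow> quasi_flat m M \<and> madic_closed m M)
       \<and> (quasi_flat m M \<longleftrightarrow>
            (\<forall>k\<ge>1. M \<inter> mpowX m k \<subseteq> {x + y | x y. x \<in> mpowY m k M \<and> y \<in> mpowX m (k + 1)}))
       \<and> (quasi_flat m M \<longleftrightarrow> (\<forall>k\<ge>1. M \<inter> mpowX m k \<subseteq> mpowY m k M))"
proof -
  have "is_ideal m"
    using assms(1) by (simp add: deformation_base_def)
  then interpret pseudoclosed_submodule m M
    using assms(2,3) by (rule pseudoclosed_submodule.intro)
  note units = deformation_base_unit[OF assms(1)]
  have iv: "quasi_flat m M \<longleftrightarrow> (\<forall>k\<ge>1. M \<inter> mpowX m k \<subseteq> mpowY m k M)"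
    using quasi_flat_imp_mpowY[OF units] unfolding quasi_flat_def by auto
  have iii: "quasi_flat m M \<longleftrightarrow>
      (\<forall>k\<ge>1. M \<inter> mpowX m k \<subseteq> {x + y | x y. x \<in> mpowY m k M \<and> y \<in> mpowX m (k + 1)})"
  proof
    assume "quasi_flat m M"
    then have "x \<in> {x + y | x y. x \<in> mpowY m k M \<and> y \<in> mpowX m (k + 1)}"
      if "1 \<le> k" "x \<in> M \<inter> mpowX m k" for k x
      using iv that zero_in_mpowX by (intro CollectI exI[of _ x] exI[of _ 0]) auto
    then show "\<forall>k\<ge>1. M \<inter> mpowX m k \<subseteq> {x + y | x y. x \<in> mpowY m k M \<and> y \<in> mpowX m (k + 1)}"
      by blast
  qed (rule quasi_flat_if_mpowY_plus_mpowX, blast)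
  have "quasi_flat m M \<Longrightarrow> madic_closed m M"
    using iv madic_closed_if_mpowY by blast
  with iv iii show ?thesis
    by blast
qed
end
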